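(* Let $\ell$ and $m$ be positive integers with $\ell\le m-2$, let $G$ be a torsion-free group written additively, let $\mathbf{a}=(a_1,\dots,a_m)$ be a sequence of elements of $G$ with set of distinct terms $A$, and let $X=\{a\in A:\mu_{\mathbf{a}}(a)\ge2\}$. Assume $|X|\ge2$, and assume there exists a positive integer $t\ge2$, being the smallest positive integer with this property, such that \[ \sum_{i=1}^t\rho_{x_i}(\mathbf{a})\ge\ell+t \] for some $x_1,\dots,x_t\in X$. If \[ |\Sigma^{\ell}(\mathbf{a})|=\sum_{a\in A}\mu_{\mathbf{a}}(a)-\ell+1, \] then $A$ is an arithmetic progression.
   Context: $\Sigma^{\ell}(\mathbf{a})$ is the set of all elements $a_{i_1}+\cdots+a_{i_\ell}$ with $i_1,\dots,i_\ell\in[1,m]$ pairwise distinct, taken in any order. $\rho_a(\mathbf{a})=|\{i\in[1,m]:a_i=a\}|$ and $\mu_{\mathbf{a}}(a)=\min(\ell,\rho_a(\mathbf{a}))$. An arithmetic progression is a set $\{c+jd:j\in[0,k-1]\}$ with $d\neq0$. *)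

theory Defs
  imports Main
begin

definition nsum_times :: "nat \<Rightarrow> 'a::group_add \<Rightarrow> 'a" where
  "nsum_times n x = sum_list (replicate n x)"

definition torsion_free :: "'a::group_add itself \<Rightarrow> bool" where
  "torsion_free _ \<longleftrightarrow> (\<forall>(x::'a) n. n > 0 \<longrightarrow> nsum_times n x = 0 \<longrightarrow> x = 0)"

text \<open>Sequence a_1..a_m is a function on indices 1..m.\<close>
definition Sigma_l :: "nat \<Rightarrow> nat \<Rightarrow> (nat \<Rightarrow> 'a::group_add) \<Rightarrow> 'a set" where
  "Sigma_l l m a = {sum_list (map a is) | is. length is = l \<and> distinct is \<and> set is \<subseteq> {1..m}}"

definition rho :: "nat \<Rightarrow> (nat \<Rightarrow> 'a) \<Rightarrow> 'a \<Rightarrow> nat" where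
  "rho m a x = card {i \<in> {1..m}. a i = x}"

definition mu :: "nat \<Rightarrow> nat \<Rightarrow> (nat \<Rightarrow> 'a) \<Rightarrow> 'a \<Rightarrow> nat" where
  "mu l m a x = min l (rho m a x)"

definition is_arith_prog :: "'a::group_add set \<Rightarrow> bool" where
  "is_arith_prog S \<longleftrightarrow> (\<exists>c d k. d \<noteq> 0 \<and> S = {c + nsum_times j d | j. j < k})"

end

theory Submission
  imports Defs "HOL-Library.Set_Algebras"
begin

(* Minimality of t >= 2 says that no value occurs more than l times, so the sum of the
   mu's is m and the hypothesis reads |Sigma^l(a)| = m - l + 1.  Delete one index of each
   value: the remaining m - |A| >= l indices (here the choice of t enters) have
   multiplicities at most l - 1, so by induction their sums of l - 1 distinct terms form a
   set P with |P| >= m - |A| - l + 2 >= 2, and P + A lies in Sigma^l(a).  Hence Kemperman's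
   inequality |P + A| >= |P| + |A| - 1 for torsion-free groups holds with equality, and the
   inverse theorem for such critical pairs makes A an arithmetic progression.  Both
   Kemperman's inequality and its inverse are proved by Hamidoune's atom method: minimal
   extremal sets meet their nontrivial translates in few points. *)

section \<open>Multiples in a torsion-free group\<close>

lemma nsum_times_0 [simp]: "nsum_times 0 x = 0"
  by (simp add: nsum_times_def)

lemma nsum_times_Suc: "nsum_times (Suc n) x = x + nsum_times n x"
  by (simp add: nsum_times_def)

lemma nsum_times_add: "nsum_times (i + j) x = nsum_times i x + nsum_times j x"
  by (induction i) (simp_all add: nsum_times_Suc add.assoc)

lemma nsum_times_conj: "nsum_times j (- c + g + c) = - c + nsum_times j g + c"
  by (induction j) (simp_all add: nsum_times_Suc add.assoc)

lemma nsum_times_inj: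
  fixes g :: "'a::group_add"
  assumes "torsion_free TYPE('a)" and "g \<noteq> 0" and "nsum_times i g = nsum_times j g"
  shows "i = j"
proof -
  have "nsum_times i g \<noteq> nsum_times j g" if "i < j" for i j
  proof
    assume "nsum_times i g = nsum_times j g"
    also have "\<dots> = nsum_times i g + nsum_times (j - i) g"
      using nsum_times_add[of i "j - i" g] that by simp
    finally have "nsum_times (j - i) g = 0" by (metis add.right_neutral add_left_cancel)
    with assms(1,2) that show False unfolding torsion_free_def by (meson zero_less_diff)
  qed
  then show ?thesis using assms(3) by (metis linorder_neqE_nat)
qed

lemma translation_invariant_imp_zero:
  fixes g :: "'a::group_add"
  assumes "torsion_free TYPE('a)" and "finite A" and "x \<in> A" and "\<forall>y\<in>A. g + y \<in> A"
  shows "g = 0"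
proof (rule ccontr)
  assume "g \<noteq> 0"
  then have "inj (\<lambda>j. nsum_times j g + x)"
    using nsum_times_inj[OF assms(1)] by (auto intro: injI)
  moreover have "nsum_times j g + x \<in> A" for j
    by (induction j) (use assms(3,4) in \<open>auto simp: nsum_times_Suc add.assoc\<close>)
  then have "range (\<lambda>j. nsum_times j g + x) \<subseteq> A" by auto
  ultimately show False
    using assms(2) by (meson finite_imageD finite_subset infinite_UNIV_nat)
qed

(* The second conjunct, that the chain leaves A right after its top, is what identifies
   the removed exit in the induction step. *)
lemma single_exit_imp_chain:
  fixes g :: "'a::group_add"
  assumes "torsion_free TYPE('a)" and "g \<noteq> 0"
  shows "finite A \<Longrightarrow> A \<noteq> {} \<Longrightarrow> card {x\<in>A. g + x \<notin> A} \<le> 1 \<Longrightarrow>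
    \<exists>e k. A = {nsum_times j g + e | j. j < k} \<and> g + nsum_times (k - 1) g + e \<notin> A"
proof (induction A rule: finite_psubset_induct)
  case (psubset A)
  obtain b where b: "b \<in> A" "g + b \<notin> A"
    using translation_invariant_imp_zero[OF assms(1) psubset.hyps(1)] psubset.prems(1) assms(2)
    by blast
  have exits: "{x\<in>A. g + x \<notin> A} = {b}"
    using b psubset.prems(2) psubset.hyps(1) by (auto simp: card_le_Suc0_iff_eq)
  show ?case
  proof (cases "A = {b}")
    case True
    then show ?thesis using b by (intro exI[of _ b] exI[of _ 1]) auto
  next
    case False
    define A' where "A' = A - {b}"
    have "x = - g + b" if "x \<in> A'" and "g + x \<notin> A'" for x
    proof -
      have "g + x \<in> A" using that exits by (auto simp: A'_def)
      then have "g + x = b" using that by (simp add: A'_def)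
      then show ?thesis by (metis add_minus_cancel)
    qed
    then have "{x\<in>A'. g + x \<notin> A'} \<subseteq> {- g + b}" by blast
    then have "card {x\<in>A'. g + x \<notin> A'} \<le> 1"
      using card_mono[of "{- g + b}"] by simp
    moreover have "A' \<subset> A" "A' \<noteq> {}" using b False by (auto simp: A'_def)
    ultimately obtain e k where ek: "A' = {nsum_times j g + e | j. j < k}"
        "g + nsum_times (k - 1) g + e \<notin> A'"
      using psubset.IH by meson
    have "k \<noteq> 0" using ek(1) \<open>A' \<noteq> {}\<close> by auto
    have top: "nsum_times (k - 1) g + e \<in> A'"
      using ek(1) \<open>k \<noteq> 0\<close> by auto
    have "g + nsum_times (k - 1) g + e \<in> A"
    proof (rule ccontr)
      assume "g + nsum_times (k - 1) g + e \<notin> A"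
      then have "nsum_times (k - 1) g + e \<in> {x\<in>A. g + x \<notin> A}"
        using top by (auto simp: A'_def add.assoc)
      then show False using exits top by (auto simp: A'_def)
    qed
    then have "g + nsum_times (k - 1) g + e = b" using ek(2) by (auto simp: A'_def)
    then have b_eq: "b = nsum_times k g + e"
      using nsum_times_Suc[of "k - 1" g] \<open>k \<noteq> 0\<close> by simp
    have "A = insert b A'" using b by (auto simp: A'_def)
    then have "A = {nsum_times j g + e | j. j < Suc k}"
      using ek(1) b_eq by (auto simp: less_Suc_eq)
    moreover have "g + nsum_times (Suc k - 1) g + e \<notin> A"
      using b b_eq by (simp add: add.assoc)
    ultimately show ?thesis by blast
  qed
qed

lemma single_exit_imp_arith_prog:
  fixes g :: "'a::group_add"
  assumes "torsion_free TYPE('a)" and "g \<noteq> 0" and "finite A" and "A \<noteq> {}"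
    and "card {x\<in>A. g + x \<notin> A} \<le> 1"
  shows "is_arith_prog A"
proof -
  obtain e k where A: "A = {nsum_times j g + e | j. j < k}"
    using single_exit_imp_chain[OF assms(1,2,3,4,5)] by blast
  have "A = {e + nsum_times j (- e + g + e) | j. j < k}"
    unfolding A nsum_times_conj by (simp add: add.assoc[symmetric])
  moreover have "- e + g + e \<noteq> 0"
    using assms(2) by (metis add.left_inverse add.right_neutral add_minus_cancel)
  ultimately show ?thesis unfolding is_arith_prog_def by blast
qed

section \<open>Transversals and coincidences\<close>

definition transversal :: "('i \<Rightarrow> 'b) \<Rightarrow> 'i set \<Rightarrow> 'i set" where
  "transversal f S = inv_into S f ` f ` S"

lemma transversal_subset: "transversal f S \<subseteq> S"
  by (auto simp: transversal_def inv_into_into)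

lemma image_transversal: "f ` transversal f S = f ` S"
  unfolding transversal_def by (rule image_inv_into_cancel) auto

lemma inj_on_transversal: "inj_on f (transversal f S)"
  by (auto simp: transversal_def f_inv_into_f intro: inj_onI)

lemma card_transversal: "card (transversal f S) = card (f ` S)"
  by (metis card_image image_transversal inj_on_transversal)

lemma inv_into_in_transversal: "x \<in> S \<Longrightarrow> inv_into S f (f x) \<in> transversal f S"
  by (simp add: transversal_def)

lemma card_Diff_transversal:
  "finite S \<Longrightarrow> card (S - transversal f S) = card S - card (f ` S)"
  by (metis card_Diff_subset card_transversal finite_subset transversal_subset)

lemma card_fiber_Diff_transversal:
  assumes "finite S"
  shows "card {i \<in> S - transversal f S. f i = x} = card {i \<in> S. f i = x} - 1"
proof (cases "x \<in> f ` S")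
  case True
  have "{i \<in> S. f i = x} = insert (inv_into S f x) {i \<in> S - transversal f S. f i = x}"
    using True inj_on_transversal[of f S] transversal_subset[of f S]
    by (auto simp: transversal_def f_inv_into_f inv_into_into inj_on_def)
  moreover have "inv_into S f x \<notin> {i \<in> S - transversal f S. f i = x}"
    using True by (auto simp: transversal_def)
  ultimately show ?thesis using assms by simp
next
  case False
  then have "{i \<in> S. f i = x} = {}" "{i \<in> S - transversal f S. f i = x} = {}" by auto
  then show ?thesis by (simp only: card.empty)
qed

definition coincidences :: "('i \<Rightarrow> 'b) \<Rightarrow> 'i set \<Rightarrow> ('i \<times> 'i) set" where
  "coincidences f P = {(p, q). p \<in> P \<and> q \<in> P \<and> p \<noteq> q \<and> f p = f q}"

lemma card_coincidences_ge:
  assumes "finite P"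
  shows "2 * (card P - card (f ` P)) \<le> card (coincidences f P)"
    (is "_ \<le> card ?D")
proof -
  define r where "r p = inv_into P f (f p)" for p
  define R where "R = P - transversal f P"
  have pair: "p \<in> P \<and> r p \<in> P \<and> p \<noteq> r p \<and> f p = f (r p)" if "p \<in> R" for p
    using that transversal_subset[of f P] inv_into_in_transversal[of p P f]
    by (auto simp: R_def r_def inv_into_into f_inv_into_f)
  define F1 where "F1 = (\<lambda>p. (p, r p)) ` R"
  define F2 where "F2 = (\<lambda>p. (r p, p)) ` R"
  have "F1 \<union> F2 \<subseteq> ?D"
  proof
    fix d assume "d \<in> F1 \<union> F2"
    then obtain p where "p \<in> R" "d = (p, r p) \<or> d = (r p, p)"
      by (auto simp: F1_def F2_def)
    then show "d \<in> ?D" using pair[of p] by (auto simp: coincidences_def)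
  qed
  moreover have "finite ?D"
    by (rule finite_subset[of _ "P \<times> P"]) (use assms in \<open>auto simp: coincidences_def\<close>)
  ultimately have "card (F1 \<union> F2) \<le> card ?D" by (rule card_mono[rotated])
  have "F1 \<inter> F2 = {}"
    using inv_into_in_transversal[of _ P f] by (auto simp: F1_def F2_def R_def r_def)
  moreover have "finite F1" "finite F2" using assms by (simp_all add: F1_def F2_def R_def)
  ultimately have "card (F1 \<union> F2) = card F1 + card F2" by (simp add: card_Un_disjoint)
  also have "\<dots> = 2 * card R" by (simp add: F1_def F2_def card_image inj_on_def)
  also have "\<dots> = 2 * (card P - card (f ` P))"
    unfolding R_def using assms by (simp add: card_Diff_transversal)
  finally show ?thesis using \<open>card (F1 \<union> F2) \<le> card ?D\<close> by simp
qed

lemma card_off_diagonal: "finite S \<Longrightarrow> card (S \<times> S - Id_on S) = card S * (card S - 1)"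
proof -
  assume "finite S"
  moreover have "Id_on S = (\<lambda>x. (x, x)) ` S" by (auto simp: Id_on_def)
  then have "card (Id_on S) = card S" by (simp add: card_image inj_on_def)
  ultimately show ?thesis
    using card_Diff_subset[OF finite_subset[OF Id_on_subset_Times] Id_on_subset_Times, of S]
    by (simp add: card_cartesian_product diff_mult_distrib2)
qed

section \<open>Sumsets in a torsion-free group\<close>

lemma elt_set_plus_eq_image: "a +o B = (+) a ` B"
  by (auto simp: elt_set_plus_def)

lemma card_elt_set_plus: "card ((a::'a::group_add) +o B) = card B"
  by (simp add: elt_set_plus_eq_image card_image)

lemma card_elt_set_plus_set_plus: "card (((a::'a::group_add) +o Y) + B) = card (Y + B)"
  by (simp add: set_plus_rearrange3 card_elt_set_plus)

lemma card_uminus_image: "card (uminus ` (Y::'a::group_add set)) = card Y"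
  by (simp add: card_image inj_on_def)

lemma uminus_set_plus: "uminus ` (Y + B) = uminus ` B + uminus ` (Y::'a::group_add set)"
  by (force simp: set_plus_def minus_add image_iff)

lemma card_le_card_set_plus:
  fixes Y B :: "'a::group_add set"
  assumes "finite Y" and "finite B" and "b \<in> B"
  shows "card Y \<le> card (Y + B)"
proof -
  have "card Y = card ((\<lambda>y. y + b) ` Y)"
    by (simp add: card_image inj_on_def)
  also have "\<dots> \<le> card (Y + B)"
    by (rule card_mono) (use assms in \<open>auto simp: finite_set_plus\<close>)
  finally show ?thesis .
qed

lemma card_set_plus_Int_extremal:
  fixes Y Z B :: "'a::plus set"
  assumes "finite Y" and "finite Z" and "finite B"
    and "card (Y + B) = card Y + k" and "card (Z + B) = card Z + k"
    and "card (Y \<inter> Z) + k \<le> card ((Y \<inter> Z) + B)"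
    and "card (Y \<union> Z) + k \<le> card ((Y \<union> Z) + B)"
  shows "card ((Y \<inter> Z) + B) = card (Y \<inter> Z) + k"
proof -
  have "card ((Y \<inter> Z) + B) \<le> card ((Y + B) \<inter> (Z + B))"
    by (rule card_mono) (use assms(1-3) in \<open>auto simp: finite_set_plus set_plus_def\<close>)
  moreover have "card ((Y + B) \<union> (Z + B)) + card ((Y + B) \<inter> (Z + B)) = card (Y + B) + card (Z + B)"
    by (rule card_Un_Int[symmetric]) (use assms(1-3) in \<open>auto simp: finite_set_plus\<close>)
  moreover have "card Y + card Z = card (Y \<union> Z) + card (Y \<inter> Z)"
    by (rule card_Un_Int) (use assms(1,2) in auto)
  ultimately show ?thesis
    using assms(4-7) by (simp add: Un_set_plus)
qed

lemma card_Int_elt_set_plus_imp_zero: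
  fixes h :: "'a::group_add"
  assumes "torsion_free TYPE('a)" and "finite Y" and "Y \<noteq> {}"
    and "card Y \<le> card (Y \<inter> (h +o Y))"
  shows "h = 0"
proof -
  have "Y \<subseteq> h +o Y"
    using card_seteq[OF assms(2) _ assms(4)] by blast
  moreover have "finite (h +o Y)"
    using assms(2) by (simp add: elt_set_plus_eq_image)
  ultimately have "Y = h +o Y"
    by (intro card_seteq) (simp_all add: card_elt_set_plus)
  then have "\<forall>y\<in>Y. h + y \<in> Y"
    by (auto simp: elt_set_plus_eq_image)
  then show ?thesis
    using translation_invariant_imp_zero[OF assms(1,2)] assms(3) by blast
qed

(* The atom argument: by submodularity of Z \<mapsto> |Z + B| the overlap of Y with a translate is
   again extremal, so minimality forces Y \<subseteq> h +o Y. *)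
lemma minimal_extremal_translate_imp_zero:
  fixes Y B :: "'a::group_add set"
  assumes tf: "torsion_free TYPE('a)" and "finite B"
    and lower: "\<And>Z. finite Z \<Longrightarrow> Z \<noteq> {} \<Longrightarrow> card Z + k \<le> card (Z + B)"
    and "finite Y" and Y: "card (Y + B) = card Y + k"
    and Y_min: "\<And>Z. finite Z \<Longrightarrow> c \<le> card Z \<Longrightarrow> card (Z + B) = card Z + k \<Longrightarrow> card Y \<le> card Z"
    and "1 \<le> c" and "c \<le> card (Y \<inter> (h +o Y))"
  shows "h = 0"
proof -
  define Y' where "Y' = h +o Y"
  have "finite Y'" and Y': "card (Y' + B) = card Y' + k"
    using \<open>finite Y\<close> Y unfolding Y'_def card_elt_set_plus card_elt_set_plus_set_plus
    by (simp_all add: elt_set_plus_eq_image)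
  have "Y \<inter> Y' \<noteq> {}" using assms(7,8) by (auto simp: Y'_def)
  have "card ((Y \<inter> Y') + B) = card (Y \<inter> Y') + k"
    by (rule card_set_plus_Int_extremal[OF \<open>finite Y\<close> \<open>finite Y'\<close> assms(2) Y Y'])
      (use lower \<open>finite Y\<close> \<open>finite Y'\<close> \<open>Y \<inter> Y' \<noteq> {}\<close> in auto)
  then have "card Y \<le> card (Y \<inter> Y')"
    using Y_min \<open>finite Y\<close> assms(8) by (simp add: Y'_def)
  then show ?thesis
    using card_Int_elt_set_plus_imp_zero[OF tf \<open>finite Y\<close>] \<open>Y \<inter> Y' \<noteq> {}\<close> by (auto simp: Y'_def)
qed

lemma singleton_set_plus: "{y} + B = y +o B"
  by (auto simp: set_plus_def elt_set_plus_def)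

(* A minimiser of |Y + B| - |Y| of least size meets each translate (y' - y) +o Y with
   y, y' in Y, hence is a singleton. *)
theorem card_set_plus_ge:
  fixes Y B :: "'a::group_add set"
  assumes tf: "torsion_free TYPE('a)" and "finite B" and "B \<noteq> {}"
    and "finite Y" and "Y \<noteq> {}"
  shows "card Y + card B \<le> card (Y + B) + 1"
proof -
  obtain b where "b \<in> B" using assms(3) by blast
  define good where "good Y \<longleftrightarrow> finite Y \<and> Y \<noteq> {}" for Y :: "'a set"
  define f where "f Y = card (Y + B) - card Y" for Y
  have f: "card (Y + B) = card Y + f Y" if "finite Y" for Y
    using card_le_card_set_plus[OF that assms(2) \<open>b \<in> B\<close>] by (simp add: f_def)
  obtain Y0 where "good Y0" and Y0_min: "\<And>Y. good Y \<Longrightarrow> f Y0 \<le> f Y"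
    using ex_has_least_nat[of good "{b}" f] by (auto simp: good_def)
  define k where "k = f Y0"
  have lower: "card Y + k \<le> card (Y + B)" if "finite Y" "Y \<noteq> {}" for Y
    using f[OF that(1)] Y0_min[of Y] that by (simp add: k_def good_def)
  obtain Y1 where Y1: "good Y1" "f Y1 = k"
    and Y1_min: "\<And>Y. good Y \<Longrightarrow> f Y = k \<Longrightarrow> card Y1 \<le> card Y"
    using ex_has_least_nat[of "\<lambda>Y. good Y \<and> f Y = k" Y0 card] \<open>good Y0\<close> k_def by auto
  have "finite Y1" and Y1': "card (Y1 + B) = card Y1 + k"
    using Y1 f[of Y1] by (auto simp: good_def)
  have Y1_min': "card Y1 \<le> card Z"
    if "finite Z" and "1 \<le> card Z" and "card (Z + B) = card Z + k" for Z
  proof -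
    have "Z \<noteq> {}" using that(2) by auto
    then show ?thesis using Y1_min[of Z] f[OF that(1)] that(1,3) by (simp add: good_def)
  qed
  have "y' = y" if "y \<in> Y1" and "y' \<in> Y1" for y y'
  proof -
    have "y' \<in> (y' - y) +o Y1"
      unfolding elt_set_plus_eq_image by (rule image_eqI[of _ _ y]) (simp_all add: that)
    then have "Y1 \<inter> ((y' - y) +o Y1) \<noteq> {}" using that by blast
    then have overlap: "1 \<le> card (Y1 \<inter> ((y' - y) +o Y1))"
      using \<open>finite Y1\<close> by (simp add: Suc_le_eq card_gt_0_iff)
    have "y' - y = 0"
      by (rule minimal_extremal_translate_imp_zero[OF tf assms(2) lower \<open>finite Y1\<close> Y1' Y1_min'
            order_refl overlap])
    then show ?thesis by simp
  qed
  moreover obtain y where "y \<in> Y1" using Y1(1) by (auto simp: good_def)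
  ultimately have "Y1 = {y}" by blast
  then have "k = card B - 1"
    using f[of Y1] Y1 by (simp add: singleton_set_plus card_elt_set_plus)
  then show ?thesis using lower[OF assms(4,5)] by simp
qed

section \<open>Critical pairs\<close>

definition unique_differences :: "'a::group_add set \<Rightarrow> bool" where
  "unique_differences Y \<longleftrightarrow>
    (\<forall>y1\<in>Y. \<forall>y2\<in>Y. \<forall>y3\<in>Y. \<forall>y4\<in>Y. y1 - y2 = y3 - y4 \<longrightarrow> y1 \<noteq> y2 \<longrightarrow> y1 = y3)"

lemma card_sum_coincidences_le_left:
  fixes Y B :: "'a::group_add set"
  assumes "finite Y" and B: "unique_differences (uminus ` B)"
  shows "card (coincidences (case_prod (+)) (Y \<times> B)) \<le> card Y * (card Y - 1)"
proof -
  let ?D = "coincidences (case_prod (+)) (Y \<times> B)"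
  let ?\<pi> = "\<lambda>(p, q). (fst p, fst q)"
  have "inj_on ?\<pi> ?D"
  proof (rule inj_onI)
    fix u v
    assume "u \<in> ?D" "v \<in> ?D" and "?\<pi> u = ?\<pi> v"
    moreover obtain y b y' b' where "u = ((y, b), (y', b'))" by (metis prod.collapse)
    moreover obtain z c z' c' where "v = ((z, c), (z', c'))" by (metis prod.collapse)
    ultimately have uv: "u = ((y, b), (y', b'))" "v = ((y, c), (y', c'))" by auto
    from \<open>u \<in> ?D\<close> \<open>v \<in> ?D\<close> have mem: "b \<in> B" "b' \<in> B" "c \<in> B" "c' \<in> B"
      and "y \<noteq> y'" and sums: "y + b = y' + b'" "y + c = y' + c'"
      by (auto simp: coincidences_def uv)
    have "b = c"
    proof (rule ccontr)
      assume "b \<noteq> c"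
      have "- b + c = - (y + b) + (y + c)" "- b' + c' = - (y' + b') + (y' + c')"
        by (simp_all add: minus_add add.assoc del: add_uminus_conv_diff)
      then have "(- b) - (- c) = (- b') - (- c')" using sums by simp
      then have "- b = - b'"
        using B[unfolded unique_differences_def, rule_format, of "- b" "- c" "- b'" "- c'"]
          \<open>b \<noteq> c\<close> mem by simp
      then show False using sums(1) \<open>y \<noteq> y'\<close> by simp
    qed
    then show "u = v" using sums uv by simp
  qed
  moreover have "?\<pi> ` ?D \<subseteq> Y \<times> Y - Id_on Y"
    by (auto simp: coincidences_def Id_on_def)
  ultimately have "card ?D \<le> card (Y \<times> Y - Id_on Y)"
    using assms(1) by (intro card_inj_on_le) auto
  then show ?thesis using assms(1) by (simp add: card_off_diagonal)
qed

lemma card_sum_coincidences_le_right: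
  fixes Y B :: "'a::group_add set"
  assumes "finite B" and Y: "unique_differences Y"
  shows "card (coincidences (case_prod (+)) (Y \<times> B)) \<le> card B * (card B - 1)"
proof -
  let ?D = "coincidences (case_prod (+)) (Y \<times> B)"
  let ?\<pi> = "\<lambda>(p, q). (snd p, snd q)"
  have "inj_on ?\<pi> ?D"
  proof (rule inj_onI)
    fix u v
    assume "u \<in> ?D" "v \<in> ?D" and "?\<pi> u = ?\<pi> v"
    moreover obtain y b y' b' where "u = ((y, b), (y', b'))" by (metis prod.collapse)
    moreover obtain z c z' c' where "v = ((z, c), (z', c'))" by (metis prod.collapse)
    ultimately have uv: "u = ((y, b), (y', b'))" "v = ((z, b), (z', b'))" by auto
    from \<open>u \<in> ?D\<close> \<open>v \<in> ?D\<close> have mem: "y \<in> Y" "y' \<in> Y" "z \<in> Y" "z' \<in> Y"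
      and "b \<noteq> b'" and sums: "y + b = y' + b'" "z + b = z' + b'"
      by (auto simp: coincidences_def uv)
    have "y = z"
    proof (rule ccontr)
      assume "y \<noteq> z"
      have "y - z = (y + b) - (z + b)" "y' - z' = (y' + b') - (z' + b')"
        by (simp_all add: diff_conv_add_uminus minus_add add.assoc del: add_uminus_conv_diff)
      then have "y - z = y' - z'" using sums by simp
      then have "y = y'"
        using Y[unfolded unique_differences_def, rule_format, of y z y' z'] \<open>y \<noteq> z\<close> mem
        by simp
      then show False using sums(1) \<open>b \<noteq> b'\<close> by simp
    qed
    then show "u = v" using sums uv by simp
  qed
  moreover have "?\<pi> ` ?D \<subseteq> B \<times> B - Id_on B"
    by (auto simp: coincidences_def Id_on_def)
  ultimately have "card ?D \<le> card (B \<times> B - Id_on B)"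
    using assms(1) by (intro card_inj_on_le) auto
  then show ?thesis using assms(1) by (simp add: card_off_diagonal)
qed

definition critical :: "'a::plus set \<Rightarrow> 'a set \<Rightarrow> bool" where
  "critical A Y \<longleftrightarrow> finite Y \<and> 2 \<le> card Y \<and> card (Y + A) + 1 = card Y + card A"

lemma minimal_critical_unique_differences:
  fixes A Y :: "'a::group_add set"
  assumes tf: "torsion_free TYPE('a)" and "finite A" and "A \<noteq> {}"
    and "critical A Y" and Y_min: "\<And>Z. critical A Z \<Longrightarrow> card Y \<le> card Z"
  shows "unique_differences Y"
  unfolding unique_differences_def
proof (intro ballI impI)
  fix y1 y2 y3 y4
  assume "y1 \<in> Y" "y2 \<in> Y" "y3 \<in> Y" "y4 \<in> Y" and "y1 - y2 = y3 - y4" and "y1 \<noteq> y2"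
  have "1 \<le> card A" using assms(2,3) by (simp add: Suc_le_eq card_gt_0_iff)
  have lower: "card Z + (card A - 1) \<le> card (Z + A)" if "finite Z" and "Z \<noteq> {}" for Z
    using card_set_plus_ge[OF tf assms(2,3) that] \<open>1 \<le> card A\<close> by linarith
  have "finite Y" and Y: "card (Y + A) = card Y + (card A - 1)"
    using assms(4) \<open>1 \<le> card A\<close> by (auto simp: critical_def)
  have Y_min': "card Y \<le> card Z"
    if "finite Z" and "2 \<le> card Z" and "card (Z + A) = card Z + (card A - 1)" for Z
    using Y_min[of Z] that \<open>1 \<le> card A\<close> by (simp add: critical_def)
  define h where "h = y1 - y2"
  have "y1 = h + y2" by (simp add: h_def)
  moreover have "y3 = h + y4" using \<open>y1 - y2 = y3 - y4\<close> by (simp add: h_def)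
  ultimately have "{y1, y3} \<subseteq> Y \<inter> (h +o Y)"
    using \<open>y1 \<in> Y\<close> \<open>y2 \<in> Y\<close> \<open>y3 \<in> Y\<close> \<open>y4 \<in> Y\<close> by (auto simp: elt_set_plus_def)
  then have "card {y1, y3} \<le> card (Y \<inter> (h +o Y))"
    by (rule card_mono[rotated]) (simp add: \<open>finite Y\<close>)
  show "y1 = y3"
  proof (rule ccontr)
    assume "y1 \<noteq> y3"
    then have overlap: "2 \<le> card (Y \<inter> (h +o Y))"
      using \<open>card {y1, y3} \<le> card (Y \<inter> (h +o Y))\<close> by simp
    have "h = 0"
      by (rule minimal_extremal_translate_imp_zero[OF tf assms(2) lower \<open>finite Y\<close> Y Y_min'
            one_le_numeral overlap])
    with \<open>y1 \<noteq> y2\<close> show False by (simp add: h_def)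
  qed
qed

(* Count ordered pairs of distinct representations of one element of Y + B: there are at
   least 2 (|Y| - 1) (|B| - 1) of them, but unique differences in Y, resp. in -B, make such a
   pair determined by its two B-entries, resp. its two Y-entries. *)
lemma unique_differences_not_critical:
  fixes Y B :: "'a::group_add set"
  assumes "finite Y" and "finite B"
    and "unique_differences Y" and "unique_differences (uminus ` B)"
    and "3 \<le> card Y" and "2 \<le> card B"
  shows "\<not> critical B Y"
proof
  assume "critical B Y"
  let ?D = "coincidences (case_prod (+)) (Y \<times> B)"
  have "case_prod (+) ` (Y \<times> B) = Y + B" by (simp add: set_plus_image)
  then have lower: "2 * (card Y * card B - card (Y + B)) \<le> card ?D"
    using card_coincidences_ge[of "Y \<times> B" "case_prod (+)"] assms(1,2)
    by (simp add: card_cartesian_product)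
  obtain s where s: "card Y = Suc s" "2 \<le> s" using assms(5) by (cases "card Y") auto
  obtain t where t: "card B = Suc t" "1 \<le> t" using assms(6) by (cases "card B") auto
  have "card (Y + B) = s + t + 1" using \<open>critical B Y\<close> s t by (simp add: critical_def)
  then have "card Y * card B - card (Y + B) = s * t" using s t by simp
  then have "s * (2 * t) \<le> s * Suc s" "t * (2 * s) \<le> t * Suc t"
    using lower card_sum_coincidences_le_left[OF assms(1,4)]
      card_sum_coincidences_le_right[OF assms(2,3)] s t
    by (simp_all add: ac_simps)
  then have "2 * t \<le> Suc s" "2 * s \<le> Suc t"
    using s(2) t(2) by (simp_all only: mult_le_cancel1)
  then show False using s(2) by linarith
qed

lemma card_Un_elt_set_plus:
  fixes A :: "'a::group_add set"
  assumes "finite A"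
  shows "card (A \<union> (g +o A)) = card A + card {x\<in>A. g + x \<notin> A}"
proof -
  have "A \<union> (g +o A) = A \<union> (+) g ` {x\<in>A. g + x \<notin> A}"
    by (auto simp: elt_set_plus_def)
  moreover have "card (A \<union> (+) g ` {x\<in>A. g + x \<notin> A}) = card A + card ((+) g ` {x\<in>A. g + x \<notin> A})"
    by (rule card_Un_disjoint) (use assms in auto)
  ultimately show ?thesis by (simp add: card_image)
qed

lemma critical_uminus:
  fixes A Y :: "'a::group_add set"
  assumes "finite A" and "2 \<le> card A" and "critical A Y"
  shows "critical (uminus ` Y) (uminus ` A)"
  using assms by (simp add: critical_def uminus_set_plus[symmetric] card_uminus_image)

(* Otherwise Y and the negative of a minimal critical set for -Y would contradict the
   previous lemma. *)
lemma minimal_critical_card_eq_2: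
  fixes A Y :: "'a::group_add set"
  assumes tf: "torsion_free TYPE('a)" and "finite A" and "2 \<le> card A"
    and Y: "critical A Y" and Y_min: "\<And>Z. critical A Z \<Longrightarrow> card Y \<le> card Z"
  shows "card Y = 2"
proof (rule ccontr)
  assume "card Y \<noteq> 2"
  have "A \<noteq> {}" using assms(3) by auto
  have "finite Y" "2 \<le> card Y" "Y \<noteq> {}" using Y by (auto simp: critical_def)
  obtain Z where Z: "critical (uminus ` Y) Z"
    and Z_min: "\<And>Z'. critical (uminus ` Y) Z' \<Longrightarrow> card Z \<le> card Z'"
    using ex_has_least_nat[of "critical (uminus ` Y)" "uminus ` A" card]
      critical_uminus[OF assms(2,3) Y] by metis
  have "unique_differences Y"
    using minimal_critical_unique_differences[OF tf assms(2) \<open>A \<noteq> {}\<close> Y Y_min] .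
  moreover have "unique_differences (uminus ` uminus ` Z)"
    using minimal_critical_unique_differences[OF tf _ _ Z Z_min] \<open>finite Y\<close> \<open>Y \<noteq> {}\<close>
    by (simp add: image_image)
  moreover have "critical (uminus ` Z) Y"
    using critical_uminus[OF _ _ Z] \<open>finite Y\<close> \<open>2 \<le> card Y\<close>
    by (simp add: image_image card_uminus_image)
  ultimately show False
    using unique_differences_not_critical[of Y "uminus ` Z"] Z \<open>finite Y\<close> \<open>2 \<le> card Y\<close>
      \<open>card Y \<noteq> 2\<close> by (simp add: critical_def card_uminus_image)
qed

theorem critical_imp_arith_prog:
  fixes A P :: "'a::group_add set"
  assumes tf: "torsion_free TYPE('a)" and "finite A" and "2 \<le> card A" and "critical A P"
  shows "is_arith_prog A"
proof -
  obtain Y where Y: "critical A Y" and Y_min: "\<And>Z. critical A Z \<Longrightarrow> card Y \<le> card Z"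
    using ex_has_least_nat[of "critical A" P card] assms(4) by metis
  then have "card Y = 2" by (rule minimal_critical_card_eq_2[OF tf assms(2,3)])
  then obtain y1 y2 where "Y = {y1, y2}" "y1 \<noteq> y2" by (meson card_2_iff)
  define g where "g = - y1 + y2"
  have "g \<noteq> 0" using \<open>y1 \<noteq> y2\<close> by (metis g_def add_minus_cancel add.right_neutral)
  have "Y + A = (y1 +o A) \<union> (y2 +o A)"
    by (auto simp: \<open>Y = {y1, y2}\<close> set_plus_def elt_set_plus_def)
  also have "y2 +o A = y1 +o (g +o A)"
    by (simp add: set_plus_rearrange2 g_def)
  also have "(y1 +o A) \<union> (y1 +o (g +o A)) = y1 +o (A \<union> (g +o A))"
    by (auto simp: elt_set_plus_def)
  finally have "card (A \<union> (g +o A)) = card A + 1"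
    using Y \<open>card Y = 2\<close> by (simp add: critical_def card_elt_set_plus)
  then have "card {x\<in>A. g + x \<notin> A} \<le> 1"
    using card_Un_elt_set_plus[OF assms(2)] by simp
  moreover have "A \<noteq> {}" using assms(3) by auto
  ultimately show ?thesis
    using single_exit_imp_arith_prog[OF tf \<open>g \<noteq> 0\<close> assms(2)] by blast
qed

section \<open>Sums of distinct terms\<close>

definition Sigma_on :: "nat \<Rightarrow> (nat \<Rightarrow> 'a::monoid_add) \<Rightarrow> nat set \<Rightarrow> 'a set" where
  "Sigma_on l a I = {sum_list (map a js) | js. length js = l \<and> distinct js \<and> set js \<subseteq> I}"

lemma Sigma_l_eq_Sigma_on: "Sigma_l l m a = Sigma_on l a {1..m}"
  unfolding Sigma_l_def Sigma_on_def ..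

lemma Sigma_onI:
  "length js = l \<Longrightarrow> distinct js \<Longrightarrow> set js \<subseteq> I \<Longrightarrow> sum_list (map a js) \<in> Sigma_on l a I"
  unfolding Sigma_on_def by blast

lemma finite_Sigma_on: "finite I \<Longrightarrow> finite (Sigma_on l a I)"
proof -
  assume "finite I"
  have "Sigma_on l a I \<subseteq> (\<lambda>js. sum_list (map a js)) ` {js. set js \<subseteq> I \<and> length js = l}"
    unfolding Sigma_on_def by blast
  then show ?thesis
    by (rule finite_subset) (rule finite_imageI[OF finite_lists_length_eq[OF \<open>finite I\<close>]])
qed

lemma Sigma_on_Diff_transversal_plus:
  "Sigma_on k a (I - transversal a I) + a ` I \<subseteq> Sigma_on (Suc k) a I"
proof
  fix w assume "w \<in> Sigma_on k a (I - transversal a I) + a ` I"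
  then obtain s v where w: "w = s + v" and s: "s \<in> Sigma_on k a (I - transversal a I)"
    and "v \<in> a ` I"
    by (rule set_plus_elim)
  then obtain t where t: "t \<in> transversal a I" "v = a t"
    unfolding image_transversal[of a I, symmetric] by blast
  obtain js where js: "s = sum_list (map a js)" "length js = k" "distinct js"
    "set js \<subseteq> I - transversal a I"
    using s unfolding Sigma_on_def by blast
  have "sum_list (map a (js @ [t])) \<in> Sigma_on (Suc k) a I"
    by (rule Sigma_onI) (use js t transversal_subset[of a I] in auto)
  then show "w \<in> Sigma_on (Suc k) a I" by (simp add: w js t)
qed

lemma few_repeats_imp_card_Sigma_on_ge:
  fixes a :: "nat \<Rightarrow> 'a::group_add"
  assumes "finite I" and "1 \<le> l" and "l \<le> card I" and "card (I - transversal a I) < l"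
  shows "card I + 1 \<le> card (Sigma_on l a I) + l"
proof -
  have "card (I - transversal a I) \<le> l - 1" and "l - 1 \<le> card I"
    using assms(3,4) by linarith+
  from exists_subset_between[OF this Diff_subset assms(1)]
  obtain J where J: "I - transversal a I \<subseteq> J" "J \<subseteq> I" "card J = l - 1"
    by blast
  then have "finite J" using assms(1) finite_subset by blast
  define s where "s = sum_list (map a (sorted_list_of_set J))"
  have "(\<lambda>i. s + a i) ` (I - J) \<subseteq> Sigma_on l a I"
  proof
    fix w assume "w \<in> (\<lambda>i. s + a i) ` (I - J)"
    then obtain i where "i \<in> I - J" "w = s + a i" by blast
    moreover have "sum_list (map a (sorted_list_of_set J @ [i])) \<in> Sigma_on l a I"
      by (rule Sigma_onI) (use J \<open>finite J\<close> \<open>i \<in> I - J\<close> assms(2) in auto)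
    ultimately show "w \<in> Sigma_on l a I" by (simp add: s_def)
  qed
  then have "card ((\<lambda>i. s + a i) ` (I - J)) \<le> card (Sigma_on l a I)"
    by (rule card_mono[OF finite_Sigma_on[OF assms(1)]])
  moreover have "inj_on a (I - J)"
    using inj_on_transversal[of a I] by (rule inj_on_subset) (use J(1) in auto)
  then have "card ((\<lambda>i. s + a i) ` (I - J)) = card (I - J)"
    by (simp add: card_image inj_on_def)
  moreover have "card (I - J) = card I - (l - 1)"
    using J(2,3) \<open>finite J\<close> by (simp add: card_Diff_subset)
  ultimately show ?thesis using assms(2,3) by linarith
qed

lemma card_Sigma_on_Diff_transversal_plus_le:
  fixes a :: "nat \<Rightarrow> 'a::group_add"
  assumes tf: "torsion_free TYPE('a)" and "finite I" and "I \<noteq> {}"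
    and "Sigma_on l a (I - transversal a I) \<noteq> {}"
  shows "card (Sigma_on l a (I - transversal a I)) + card (a ` I) \<le> card (Sigma_on (Suc l) a I) + 1"
proof -
  have "card (Sigma_on l a (I - transversal a I)) + card (a ` I)
      \<le> card (Sigma_on l a (I - transversal a I) + a ` I) + 1"
    using assms(2-4) finite_Sigma_on[of "I - transversal a I" l a]
    by (intro card_set_plus_ge[OF tf]) auto
  also have "\<dots> \<le> card (Sigma_on (Suc l) a I) + 1"
    using card_mono[OF finite_Sigma_on[OF assms(2)] Sigma_on_Diff_transversal_plus[of l a I]]
    by simp
  finally show ?thesis .
qed

lemma card_Sigma_on_ge:
  fixes a :: "nat \<Rightarrow> 'a::group_add"
  assumes tf: "torsion_free TYPE('a)" and "finite I" and "1 \<le> l" and "l \<le> card I"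
    and "\<forall>x. card {i\<in>I. a i = x} \<le> l"
  shows "card I + 1 \<le> card (Sigma_on l a I) + l"
  using assms(3,2,4,5)
proof (induction l arbitrary: I rule: nat_induct_at_least)
  case base
  have "I - transversal a I = {}"
  proof (rule ccontr)
    assume "I - transversal a I \<noteq> {}"
    then obtain i where i: "i \<in> I - transversal a I" by blast
    have "card {j \<in> I - transversal a I. a j = a i} = 0"
      using card_fiber_Diff_transversal[OF base(1), of a "a i"] base(3) by (simp add: le_Suc_eq)
    then show False using i base(1) by auto
  qed
  then have "card (I - transversal a I) < 1" by (metis card.empty zero_less_one)
  then show ?case
    using few_repeats_imp_card_Sigma_on_ge[where a = a, OF base(1) _ base(2)] by simp
next
  case (Suc l)
  define I' where "I' = I - transversal a I"
  show ?case
  proof (cases "card I' < Suc l")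
    case True
    then show ?thesis
      using few_repeats_imp_card_Sigma_on_ge[where a = a, OF Suc.prems(1) _ Suc.prems(2)]
      by (simp add: I'_def)
  next
    case False
    have "finite I'" using Suc.prems(1) by (simp add: I'_def)
    moreover have "\<forall>x. card {i\<in>I'. a i = x} \<le> l"
      using Suc.prems(3) card_fiber_Diff_transversal[OF Suc.prems(1), of a]
      by (simp add: I'_def le_diff_conv)
    ultimately have IH: "card I' + 1 \<le> card (Sigma_on l a I') + l"
      using Suc.IH False by simp
    then have "Sigma_on l a I' \<noteq> {}"
      using False by (intro notI) simp
    moreover have "I \<noteq> {}" using Suc.prems(2) by auto
    ultimately have "card (Sigma_on l a I') + card (a ` I) \<le> card (Sigma_on (Suc l) a I) + 1"
      unfolding I'_def by (intro card_Sigma_on_Diff_transversal_plus_le[OF tf Suc.prems(1)])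
    then show ?thesis
      using IH card_Diff_transversal[OF Suc.prems(1), of a] card_image_le[OF Suc.prems(1), of a]
      by (simp add: I'_def)
  qed
qed

lemma card_Sigma_on_le_imp_arith_prog:
  fixes a :: "nat \<Rightarrow> 'a::group_add"
  assumes tf: "torsion_free TYPE('a)" and "finite I" and "2 \<le> l"
    and "\<forall>x. card {i\<in>I. a i = x} \<le> l" and "l + card (a ` I) \<le> card I" and "2 \<le> card (a ` I)"
    and "card (Sigma_on l a I) + l \<le> card I + 1"
  shows "is_arith_prog (a ` I)"
proof -
  define I' where "I' = I - transversal a I"
  define P where "P = Sigma_on (l - 1) a I'"
  have "finite I'" using assms(2) by (simp add: I'_def)
  have "card I' = card I - card (a ` I)"
    unfolding I'_def using assms(2) by (rule card_Diff_transversal)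
  moreover have "\<forall>x. card {i\<in>I'. a i = x} \<le> l - 1"
    using assms(4) card_fiber_Diff_transversal[OF assms(2), of a] by (simp add: I'_def diff_le_mono)
  ultimately have "card I' + 1 \<le> card P + (l - 1)"
    unfolding P_def using card_Sigma_on_ge[OF tf \<open>finite I'\<close>, of "l - 1" a] assms(3,5) by simp
  then have "2 \<le> card P" using \<open>card I' = card I - card (a ` I)\<close> assms(3,5) by linarith
  have "card P + card (a ` I) \<le> card (P + a ` I) + 1"
    using assms(2,6) \<open>2 \<le> card P\<close> finite_Sigma_on[OF \<open>finite I'\<close>]
    by (intro card_set_plus_ge[OF tf]) (auto simp: P_def)
  moreover have "card (P + a ` I) \<le> card (Sigma_on l a I)"
    using card_mono[OF finite_Sigma_on[OF assms(2)] Sigma_on_Diff_transversal_plus[of "l - 1" a I]]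
      assms(3) by (simp add: P_def I'_def)
  ultimately have "card (P + a ` I) + 1 = card P + card (a ` I)"
    using \<open>card I' + 1 \<le> card P + (l - 1)\<close> \<open>card I' = card I - card (a ` I)\<close> assms(3,5,7)
    by linarith
  then have "critical (a ` I) P"
    using \<open>2 \<le> card P\<close> finite_Sigma_on[OF \<open>finite I'\<close>] by (simp add: critical_def P_def)
  then show ?thesis
    using critical_imp_arith_prog[OF tf _ assms(6)] assms(2) by blast
qed

lemma sum_card_fibers: "finite I \<Longrightarrow> (\<Sum>x\<in>f ` I. card {i\<in>I. f i = x}) = card I"
  using sum.image_gen[of I "\<lambda>_. 1::nat" f] by simp

lemma heavy_fibers_imp_card_ge:
  assumes "finite I" and "S \<subseteq> f ` I" and "card S + l \<le> (\<Sum>x\<in>S. card {i\<in>I. f i = x})"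
  shows "l + card (f ` I) \<le> card I"
proof -
  have "finite (f ` I)" using assms(1) by simp
  have "1 \<le> card {i\<in>I. f i = x}" if "x \<in> f ` I" for x
    using that assms(1) by (auto simp: Suc_le_eq card_gt_0_iff)
  then have "card (f ` I - S) \<le> (\<Sum>x\<in>f ` I - S. card {i\<in>I. f i = x})"
    using sum_mono[of "f ` I - S" "\<lambda>_. 1::nat"] by simp
  moreover have "card (f ` I) = card S + card (f ` I - S)"
    using assms(2) \<open>finite (f ` I)\<close> by (metis card_Diff_subset card_mono finite_subset le_add_diff_inverse)
  moreover have "card I = (\<Sum>x\<in>f ` I - S. card {i\<in>I. f i = x}) + (\<Sum>x\<in>S. card {i\<in>I. f i = x})"
    unfolding sum_card_fibers[OF assms(1), of f, symmetric]
    by (rule sum.subset_diff[OF assms(2) \<open>finite (f ` I)\<close>])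
  ultimately show ?thesis using assms(3) by linarith
qed

lemma rho_le_if_no_heavy_value:
  assumes "2 \<le> l"
    and "\<not> (\<exists>S \<subseteq> {x \<in> a ` {1..m}. mu l m a x \<ge> 2}. card S = 1 \<and> (\<Sum>x\<in>S. rho m a x) \<ge> l + 1)"
  shows "rho m a x \<le> l"
proof (rule ccontr)
  assume "\<not> rho m a x \<le> l"
  then have "{i \<in> {1..m}. a i = x} \<noteq> {}" unfolding rho_def by (metis card.empty le0)
  then have "x \<in> {x \<in> a ` {1..m}. mu l m a x \<ge> 2}"
    using \<open>\<not> rho m a x \<le> l\<close> assms(1) by (auto simp: mu_def)
  then have "\<exists>S \<subseteq> {x \<in> a ` {1..m}. mu l m a x \<ge> 2}. card S = 1 \<and> (\<Sum>x\<in>S. rho m a x) \<ge> l + 1"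
    using \<open>\<not> rho m a x \<le> l\<close> by (intro exI[of _ "{x}"]) auto
  with assms(2) show False ..
qed

theorem theorem6p7:
  fixes l m t :: nat and a :: "nat \<Rightarrow> 'a::group_add"
  assumes "l \<ge> 1" and "m \<ge> 1" and "l + 2 \<le> m"
    and "torsion_free TYPE('a)"
    and "card {x \<in> a ` {1..m}. mu l m a x \<ge> 2} \<ge> 2"
    and "t \<ge> 2"
    and "\<exists>S \<subseteq> {x \<in> a ` {1..m}. mu l m a x \<ge> 2}. card S = t \<and> (\<Sum>x\<in>S. rho m a x) \<ge> l + t"
    and "\<forall>t'. 0 < t' \<and> t' < t \<longrightarrow>
           \<not> (\<exists>S \<subseteq> {x \<in> a ` {1..m}. mu l m a x \<ge> 2}. card S = t' \<and> (\<Sum>x\<in>S. rho m a x) \<ge> l + t')"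
    and "int (card (Sigma_l l m a)) = int (\<Sum>x\<in>a ` {1..m}. mu l m a x) - int l + 1"
  shows "is_arith_prog (a ` {1..m})"
proof -
  let ?I = "{1..m}"
  let ?X = "{x \<in> a ` ?I. mu l m a x \<ge> 2}"
  have "?X \<noteq> {}" using assms(5) by (metis card.empty not_numeral_le_zero)
  then have "2 \<le> l" by (auto simp: mu_def)
  have "\<not> (\<exists>S \<subseteq> ?X. card S = 1 \<and> (\<Sum>x\<in>S. rho m a x) \<ge> l + 1)"
    using assms(6) assms(8)[rule_format, of 1] by simp
  then have "rho m a x \<le> l" for x by (rule rho_le_if_no_heavy_value[OF \<open>2 \<le> l\<close>])
  then have fibers: "\<forall>x. card {i \<in> ?I. a i = x} \<le> l" by (simp add: rho_def)
  then have "(\<Sum>x\<in>a ` ?I. mu l m a x) = m"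
    using sum_card_fibers[of ?I a] by (simp add: mu_def rho_def min_absorb2)
  then have "int (card (Sigma_on l a ?I)) = int m - int l + 1"
    using assms(9) by (simp add: Sigma_l_eq_Sigma_on)
  then have "card (Sigma_on l a ?I) + l \<le> card ?I + 1" by simp
  moreover obtain S where "S \<subseteq> ?X" "card S = t" "l + t \<le> (\<Sum>x\<in>S. rho m a x)"
    using assms(7) by blast
  then have "S \<subseteq> a ` ?I" "card S + l \<le> (\<Sum>x\<in>S. card {i \<in> ?I. a i = x})"
    by (auto simp: rho_def)
  then have "l + card (a ` ?I) \<le> card ?I"
    by (rule heavy_fibers_imp_card_ge[OF finite_atLeastAtMost])
  moreover have "card ?X \<le> card (a ` ?I)" by (rule card_mono) auto
  then have "2 \<le> card (a ` ?I)" using assms(5) by linarith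
  ultimately show ?thesis
    using card_Sigma_on_le_imp_arith_prog[OF assms(4) _ \<open>2 \<le> l\<close> fibers] by simp
qed

end
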